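(* Let $m\ge 2d$. Then a generic $(\mathbf A,\mathbf b)\in\mathbb R^{m\times(d+1)}$ (with $\mathbf A\in\mathbb R^{m\times d}$, $\mathbf b\in\mathbb R^m$) is affine phase retrievable for $\mathbb R^d$; that is, there is a dense open set $X\subset\mathbb R^{m\times(d+1)}$ whose complement has Lebesgue measure zero such that every $(\mathbf A,\mathbf b)\in X$ is affine phase retrievable.
   Context: For $\mathbf A=(\mathbf a_1,\ldots,\mathbf a_m)^\top\in\mathbb R^{m\times d}$ and $\mathbf b=(b_1,\ldots,b_m)^\top\in\mathbb R^m$, $(\mathbf A,\mathbf b)$ is called affine phase retrievable for $\mathbb R^d$ if the map $\mathbf x\mapsto(|\langle\mathbf a_1,\mathbf x\rangle+b_1|,\ldots,|\langle\mathbf a_m,\mathbf x\rangle+b_m|)$ is injective on $\mathbb R^d$. An element of $\mathbb R^N$ is called generic (a property holds generically) if it lies in some dense open set whose complement is a null set. *)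

theory Defs
  imports "HOL-Analysis.Analysis"
begin

definition affine_phase_retrievable :: "real^'d^'m \<Rightarrow> real^'m \<Rightarrow> bool" where
  "affine_phase_retrievable A b \<longleftrightarrow>
     inj (\<lambda>x::real^'d. (\<chi> i. \<bar>(A *v x) $ i + b $ i\<bar>) :: real^'m)"

end

theory Submission
  imports Defs
begin

text \<open>Call (A, b) degenerate if some d rows of A, or some d + 1 rows of the augmented
  matrix [A b], have a common nonzero normal vector. The degenerate set is closed, being a
  projection along a compact sphere, and null: it is covered by finitely many sets on which one
  row is a combination of fewer than full-dimension other rows, and each of these is the smooth
  image of a hyperplane. Off this set, suppose |<a_i, x> + b_i| = |<a_i, y> + b_i| for all i
  with x \<noteq> y. Fewer than d rows are orthogonal to x - y, so at least m - d + 1 \<ge> d + 1 rows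
  satisfy <a_i, x> + b_i = -(<a_i, y> + b_i), i.e. (a_i, b_i) is orthogonal to (x + y, 2).\<close>

lemma span_image_imp_sum:
  fixes z :: "'i \<Rightarrow> 'v::real_vector"
  assumes "finite T" "y \<in> span (z ` T)"
  shows "\<exists>c. y = (\<Sum>j\<in>T. c j *\<^sub>R z j)"
  using assms(2)
proof (induction rule: span_induct_alt)
  case base
  show ?case by (rule exI[of _ "\<lambda>_. 0"]) simp
next
  case (step a x y)
  then obtain c j0 where "y = (\<Sum>j\<in>T. c j *\<^sub>R z j)" "j0 \<in> T" "x = z j0"
    by blast
  then have "a *\<^sub>R x + y = (\<Sum>j\<in>T. (c j + (if j = j0 then a else 0)) *\<^sub>R z j)"
    using assms(1)
    by (simp add: scaleR_add_left sum.distrib if_distrib[of "\<lambda>r. r *\<^sub>R _"] cong: if_cong)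
  then show ?case by (rule exI[of _ "\<lambda>j. c j + (if j = j0 then a else 0)"])
qed

lemma common_normal_imp_in_span_others:
  fixes z :: "'i \<Rightarrow> 'v::euclidean_space"
  assumes "finite T" "card T = DIM('v)" "u \<noteq> 0" "\<forall>j\<in>T. z j \<bullet> u = 0"
  shows "\<exists>k\<in>T. z k \<in> span (z ` (T - {k}))"
proof (cases "inj_on z T")
  case False
  then obtain k j where "k \<in> T" "j \<in> T" "k \<noteq> j" "z k = z j"
    unfolding inj_on_def by blast
  then show ?thesis by (metis DiffI singletonD imageI span_base)
next
  case True
  have "dependent (z ` T)"
  proof (rule ccontr)
    assume "independent (z ` T)"
    moreover have "z ` T \<subseteq> {x. u \<bullet> x = 0}"
      using assms(4) by (auto simp: inner_commute)
    ultimately have "card (z ` T) \<le> DIM('v) - 1"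
      using independent_card_le_dim dim_hyperplane[OF assms(3)] by metis
    moreover have "card (z ` T) = DIM('v)"
      using True assms(2) by (simp add: card_image)
    ultimately show False
      using DIM_positive[where 'a = 'v] by linarith
  qed
  then obtain k where "k \<in> T" "z k \<in> span (z ` T - {z k})"
    unfolding dependent_def by blast
  moreover have "z ` T - {z k} \<subseteq> z ` (T - {k})" by auto
  ultimately show ?thesis using span_mono by blast
qed

lemma linear_axis: "linear (axis k :: 'a::real_vector \<Rightarrow> 'a^'n)"
  by (intro linearI) (simp_all add: vec_eq_iff axis_def)

lemma negligible_row_in_span:
  fixes k :: "'m::finite" and T :: "'m set"
  assumes "k \<notin> T" "card T < DIM('v::euclidean_space)"
  shows "negligible {Z :: 'v^'m. Z$k \<in> span ((\<lambda>j. Z$j) ` T)}"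
proof -
  \<comment> \<open>Parametrise by matrices whose row k stores the coefficients in the coordinates e ` T;
    the spare basis vector b makes the parameter set a hyperplane.\<close>
  obtain e :: "'m \<Rightarrow> 'v" where e: "inj_on e T" "e ` T \<subseteq> Basis"
    using assms(2) card_le_inj[of T "Basis :: 'v set"] by (metis finite finite_Basis less_imp_le)
  have "card (e ` T) < card (Basis :: 'v set)"
    using assms(2) e(1) by (simp add: card_image)
  then obtain b :: 'v where b: "b \<in> Basis" "b \<notin> e ` T"
    by (metis card_mono finite finite_imageI not_le subsetI)
  define f :: "'v^'m \<Rightarrow> 'v^'m" where
    "f Z = Z + axis k ((\<Sum>j\<in>T. (Z$k \<bullet> e j) *\<^sub>R Z$j) - Z$k)" for Z
  have "negligible {Z :: 'v^'m. axis k b \<bullet> Z = 0}"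
    using b(1) by (intro negligible_hyperplane) (auto simp: nonzero_Basis)
  moreover have "f differentiable_on S" for S
    unfolding f_def differentiable_on_def
    by (intro ballI differentiable_add differentiable_ident
        differentiable_compose[where f = "axis k", OF linear_imp_differentiable[OF linear_axis]]
        differentiable_diff differentiable_sum differentiable_scaleR differentiable_inner
        differentiable_const bounded_linear_imp_differentiable[OF bounded_linear_vec_nth] finite)
  ultimately have "negligible (f ` {Z. axis k b \<bullet> Z = 0})"
    by (intro negligible_differentiable_image_negligible) auto
  moreover have "{Z :: 'v^'m. Z$k \<in> span ((\<lambda>j. Z$j) ` T)} \<subseteq> f ` {Z. axis k b \<bullet> Z = 0}"
  proof
    fix Z :: "'v^'m"
    assume "Z \<in> {Z. Z$k \<in> span ((\<lambda>j. Z$j) ` T)}"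
    then obtain c where c: "Z$k = (\<Sum>j\<in>T. c j *\<^sub>R Z$j)"
      using span_image_imp_sum[of T] by auto
    define w where "w = (\<Sum>j\<in>T. c j *\<^sub>R e j)"
    define Z' where "Z' = Z + axis k (w - Z$k)"
    have Z'_rows: "Z'$k = w" "\<And>j. j \<in> T \<Longrightarrow> Z'$j = Z$j"
      using assms(1) by (auto simp: Z'_def axis_def)
    have "w \<bullet> e j = c j" if "j \<in> T" for j
    proof -
      have "w \<bullet> e j = (\<Sum>i\<in>T. if i = j then c i else 0)"
        unfolding w_def inner_sum_left
        using that e by (intro sum.cong) (auto simp: inner_Basis image_subset_iff dest: inj_onD)
      then show ?thesis using that by simp
    qed
    then have "f Z' = Z' + axis k ((\<Sum>j\<in>T. c j *\<^sub>R Z$j) - w)"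
      by (auto simp: f_def Z'_rows intro!: sum.cong arg_cong[where f = "axis k"])
    then have "f Z' = Z"
      by (simp add: c Z'_def vec_eq_iff axis_def)
    moreover have "axis k b \<bullet> Z' = 0"
      using e(2) b
      by (auto simp: inner_axis' Z'_rows w_def inner_sum_right inner_Basis image_subset_iff
          intro!: sum.neutral)
    ultimately show "Z \<in> f ` {Z. axis k b \<bullet> Z = 0}" by blast
  qed
  ultimately show ?thesis by (rule negligible_subset)
qed

definition degenerate_rows :: "('v::euclidean_space^'m::finite) set" where
  "degenerate_rows =
     {Z. \<exists>T. card T = DIM('v) \<and> (\<exists>u. norm u = 1 \<and> (\<forall>i\<in>T. Z$i \<bullet> u = 0))}"

lemma degenerate_rowsI:
  fixes Z :: "'v::euclidean_space^'m::finite"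
  assumes "DIM('v) \<le> card {i. Z$i \<bullet> w = 0}" "w \<noteq> 0"
  shows "Z \<in> degenerate_rows"
proof -
  obtain T where T: "T \<subseteq> {i. Z$i \<bullet> w = 0}" "card T = DIM('v)"
    using assms(1) obtain_subset_with_card_n by metis
  have "norm (w /\<^sub>R norm w) = 1" "\<forall>i\<in>T. Z$i \<bullet> (w /\<^sub>R norm w) = 0"
    using assms(2) T(1) by auto
  with T(2) show ?thesis
    unfolding degenerate_rows_def by blast
qed

lemma closed_degenerate_rows: "closed (degenerate_rows :: ('v::euclidean_space^'m::finite) set)"
proof -
  have rows_eq: "degenerate_rows = (\<Union>T\<in>{T. card T = DIM('v)}.
          {Z :: 'v^'m. \<exists>u. u \<in> sphere 0 1 \<and> (u, Z) \<in> {(u, Z). \<forall>i\<in>T. Z$i \<bullet> u = 0}})"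
    by (auto simp: degenerate_rows_def)
  have normals_closed: "closed {(u, Z :: 'v^'m). \<forall>i\<in>T. Z$i \<bullet> u = 0}" for T :: "'m set"
    unfolding case_prod_unfold Ball_def Collect_all_eq
    by (intro closed_INT ballI closed_Collect_imp closed_Collect_eq continuous_intros) auto
  then show ?thesis
    unfolding rows_eq
    by (intro closed_UN finite ballI closed_compact_projection[OF compact_sphere] normals_closed)
qed

lemma negligible_degenerate_rows:
  "negligible (degenerate_rows :: ('v::euclidean_space^'m::finite) set)"
proof -
  have cover: "degenerate_rows \<subseteq> (\<Union>T\<in>{T. card T = DIM('v)}. \<Union>k\<in>T.
          {Z :: 'v^'m. Z$k \<in> span ((\<lambda>j. Z$j) ` (T - {k}))})"
  proof
    fix Z :: "'v^'m"
    assume "Z \<in> degenerate_rows"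
    then obtain T and u :: 'v where T: "card T = DIM('v)" "norm u = 1" "\<forall>i\<in>T. Z$i \<bullet> u = 0"
      by (auto simp: degenerate_rows_def)
    then obtain k where "k \<in> T" "Z$k \<in> span ((\<lambda>j. Z$j) ` (T - {k}))"
      using common_normal_imp_in_span_others[where z = "\<lambda>j. Z$j" and u = u and T = T]
      by (metis finite norm_zero zero_neq_one)
    with T(1) show "Z \<in> (\<Union>T\<in>{T. card T = DIM('v)}. \<Union>k\<in>T. {Z. Z$k \<in> span ((\<lambda>j. Z$j) ` (T - {k}))})"
      by blast
  qed
  have pieces: "negligible {Z :: 'v^'m. Z$k \<in> span ((\<lambda>j. Z$j) ` (T - {k}))}"
    if "card T = DIM('v)" "k \<in> T" for T k
    using that by (intro negligible_row_in_span) auto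
  show ?thesis
    by (rule negligible_subset[OF _ cover]) (auto intro!: negligible_Union pieces)
qed

lemma negligible_Times_UNIV:
  fixes N :: "'a::euclidean_space set"
  assumes "negligible N"
  shows "negligible (N \<times> (UNIV :: 'b::euclidean_space set))"
proof -
  obtain N' where N': "N' \<in> null_sets lborel" "N \<subseteq> N'"
    using assms by (auto simp: negligible_iff_null_sets null_sets_completion_iff2)
  have "N' \<times> UNIV \<in> null_sets (lborel \<Otimes>\<^sub>M (lborel :: 'b measure))"
    using N'(1) by (intro lborel.times_in_null_sets1) auto
  then have "N' \<times> (UNIV :: 'b set) \<in> null_sets lborel"
    by (simp add: lborel_prod)
  then show ?thesis
    using N'(2) unfolding negligible_iff_null_sets null_sets_completion_iff2
    by (intro bexI[of _ "N' \<times> UNIV"]) auto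
qed

definition zip_rows :: "'a^'m::finite \<Rightarrow> 'b^'m \<Rightarrow> ('a \<times> 'b)^'m" where
  "zip_rows A b = (\<chi> i. (A$i, b$i))"

lemma linear_zip_rows: "linear (\<lambda>p. zip_rows (fst p) (snd p))"
  by (intro linearI) (simp_all add: zip_rows_def vec_eq_iff)

lemma negligible_vimage_zip_rows:
  fixes N :: "(('a::euclidean_space \<times> 'b::euclidean_space)^'m::finite) set"
  assumes "negligible N"
  shows "negligible ((\<lambda>p. zip_rows (fst p) (snd p)) -` N)"
proof -
  define unzip :: "('a \<times> 'b)^'m \<Rightarrow> ('a^'m) \<times> ('b^'m)" where
    "unzip Z = ((\<chi> i. fst (Z$i)), (\<chi> i. snd (Z$i)))" for Z
  have "linear unzip"
    by (intro linearI) (simp_all add: unzip_def vec_eq_iff)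
  then have "negligible (unzip ` N)"
    using assms by (intro negligible_differentiable_image_negligible linear_imp_differentiable_on)
      (simp_all add: algebra_simps)
  moreover have "(\<lambda>p. zip_rows (fst p) (snd p)) -` N = unzip ` N"
    by (force simp: unzip_def zip_rows_def vec_eq_iff intro: image_eqI[where x = "zip_rows _ _"])
  ultimately show ?thesis by simp
qed

lemma affine_phase_retrievable_if_nondegenerate:
  fixes A :: "real^'d::finite^'m::finite" and b :: "real^'m"
  assumes "CARD('m) \<ge> 2 * CARD('d)" "A \<notin> degenerate_rows" "zip_rows A b \<notin> degenerate_rows"
  shows "affine_phase_retrievable A b"
  unfolding affine_phase_retrievable_def
proof (rule injI, rule ccontr)
  fix x y :: "real^'d"
  assume "(\<chi> i. \<bar>(A *v x) $ i + b $ i\<bar>) = ((\<chi> i. \<bar>(A *v y) $ i + b $ i\<bar>) :: real^'m)" "x \<noteq> y"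
  then have same_modulus: "\<bar>A$i \<bullet> x + b$i\<bar> = \<bar>A$i \<bullet> y + b$i\<bar>" for i
    by (auto simp: vec_eq_iff matrix_vector_mul_component)
  define S where "S = {i. A$i \<bullet> (x - y) = 0}"
  have "card S < CARD('d)"
    using degenerate_rowsI[of A "x - y"] assms(2) \<open>x \<noteq> y\<close> by (force simp: S_def)
  have "- S \<subseteq> {i. zip_rows A b $ i \<bullet> (x + y, 2) = 0}"
  proof
    fix i assume "i \<in> - S"
    then have "A$i \<bullet> x + b$i \<noteq> A$i \<bullet> y + b$i"
      by (simp add: S_def inner_diff_right)
    then have "A$i \<bullet> x + b$i = - (A$i \<bullet> y + b$i)"
      using same_modulus[of i] by (auto simp: abs_eq_iff)
    then show "i \<in> {i. zip_rows A b $ i \<bullet> (x + y, 2) = 0}"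
      by (simp add: zip_rows_def inner_add_right)
  qed
  then have "card (- S) \<le> card {i. zip_rows A b $ i \<bullet> (x + y, 2::real) = 0}"
    by (simp add: card_mono)
  moreover have "card (- S) = CARD('m) - card S"
    by (simp add: Compl_eq_Diff_UNIV card_Diff_subset)
  ultimately have "DIM((real^'d) \<times> real) \<le> card {i. zip_rows A b $ i \<bullet> (x + y, 2::real) = 0}"
    using \<open>card S < CARD('d)\<close> assms(1) by simp
  then show False
    using degenerate_rowsI assms(3) by (fastforce simp: zero_prod_def)
qed

theorem theorem2p3:
  assumes "CARD('m::finite) \<ge> 2 * CARD('d::finite)"
  shows "\<exists>X :: ((real^'d^'m) \<times> (real^'m)) set.
           open X \<and> closure X = UNIV \<and> negligible (- X) \<and>
           (\<forall>(A, b) \<in> X. affine_phase_retrievable A b)"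
proof -
  define B :: "((real^'d^'m) \<times> (real^'m)) set" where
    "B = fst -` degenerate_rows \<union> (\<lambda>p. zip_rows (fst p) (snd p)) -` degenerate_rows"
  have "closed B"
    unfolding B_def
    by (intro closed_Un closed_vimage_fst closed_degenerate_rows continuous_closed_vimage
        linear_continuous_at linear_conv_bounded_linear[THEN iffD1, OF linear_zip_rows])
  moreover have "negligible B"
    unfolding B_def vimage_fst
    by (intro negligible_Un negligible_Times_UNIV negligible_vimage_zip_rows negligible_degenerate_rows)
  moreover from this have "interior B = {}"
    using open_not_negligible[OF open_interior] negligible_subset[OF _ interior_subset] by blast
  moreover have "affine_phase_retrievable A b" if "(A, b) \<notin> B" for A b
    using that affine_phase_retrievable_if_nondegenerate[OF assms] by (simp add: B_def)
  ultimately show ?thesis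
    by (intro exI[of _ "- B"]) (auto simp: open_Compl closure_interior)
qed

end
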